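(* Let $k$ be a field and $A_k$ a $k$-algebra with a $k$-linear involution $a\mapsto a^*$. Let $E$ be a finite-dimensional $A_k$-module with a nondegenerate $k$-bilinear form $b$ satisfying $b(ax,y)=b(x,a^*y)$ for all $a\in A_k$, $x,y\in E$, where either $b$ is alternating, or $b$ is symmetric and $\mathrm{char}(k)\neq2$. Let $S$ be an $A_k$-submodule of $E$ which is totally isotropic ($b(x,y)=0$ for all $x,y\in S$) and maximal among totally isotropic $A_k$-submodules. Let $S_\perp$ be its orthogonal for $b$, $X=S_\perp/S$, and $b_1$ the nondegenerate form on $X$ induced by $b$. Then: (i) the $A_k$-module $X$ is semisimple, and the only $A_k$-submodule of $X$ totally isotropic for $b_1$ is $0$; (ii) if $b$ is symmetric (and $\mathrm{char}(k)\neq2$), then $b$ is isomorphic to the orthogonal direct sum of $b_1$ and a hyperbolic form of rank $2\dim S$. *)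

theory Defs
  imports Complex_Main
begin

text \<open>The algebra A_k is a type 'a of class ring_1
  together with a k-scalar multiplication sa making it a k-algebra. The module E is a type 'e
  with k-scalar multiplication se and an A_k-action act.\<close>

definition k_algebra :: "('k::field \<Rightarrow> 'a::ring_1 \<Rightarrow> 'a) \<Rightarrow> bool" where
  "k_algebra sa \<longleftrightarrow> vector_space sa \<and>
     (\<forall>c x y. sa c (x * y) = sa c x * y) \<and> (\<forall>c x y. sa c (x * y) = x * sa c y)"

definition algebra_involution :: "('k::field \<Rightarrow> 'a::ring_1 \<Rightarrow> 'a) \<Rightarrow> ('a \<Rightarrow> 'a) \<Rightarrow> bool" where
  "algebra_involution sa invl \<longleftrightarrow>
     (\<forall>c x. invl (sa c x) = sa c (invl x)) \<and> (\<forall>x y. invl (x + y) = invl x + invl y) \<and>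
     (\<forall>x y. invl (x * y) = invl y * invl x) \<and> (\<forall>x. invl (invl x) = x)"

definition algebra_module ::
  "('k::field \<Rightarrow> 'a::ring_1 \<Rightarrow> 'a) \<Rightarrow> ('k \<Rightarrow> 'e::ab_group_add \<Rightarrow> 'e) \<Rightarrow> ('a \<Rightarrow> 'e \<Rightarrow> 'e) \<Rightarrow> bool" where
  "algebra_module sa se act \<longleftrightarrow> vector_space se \<and>
     (\<forall>v. act 1 v = v) \<and> (\<forall>x y v. act (x * y) v = act x (act y v)) \<and>
     (\<forall>x y v. act (x + y) v = act x v + act y v) \<and>
     (\<forall>x v w. act x (v + w) = act x v + act x w) \<and>
     (\<forall>c x v. act (sa c x) v = se c (act x v)) \<and>
     (\<forall>c x v. act x (se c v) = se c (act x v))"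

definition finite_dim :: "('k::field \<Rightarrow> 'e::ab_group_add \<Rightarrow> 'e) \<Rightarrow> bool" where
  "finite_dim se \<longleftrightarrow> (\<exists>B. finite B \<and> module.span se B = UNIV)"

definition bilinear_form :: "('k::field \<Rightarrow> 'e::ab_group_add \<Rightarrow> 'e) \<Rightarrow> ('e \<Rightarrow> 'e \<Rightarrow> 'k) \<Rightarrow> bool" where
  "bilinear_form se b \<longleftrightarrow>
     (\<forall>x y z. b (x + y) z = b x z + b y z) \<and> (\<forall>x y z. b x (y + z) = b x y + b x z) \<and>
     (\<forall>c x y. b (se c x) y = c * b x y) \<and> (\<forall>c x y. b x (se c y) = c * b x y)"

definition nondegenerate :: "('e::ab_group_add \<Rightarrow> 'e \<Rightarrow> 'k::field) \<Rightarrow> bool" where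
  "nondegenerate b \<longleftrightarrow> (\<forall>x. (\<forall>y. b x y = 0) \<longrightarrow> x = 0) \<and> (\<forall>y. (\<forall>x. b x y = 0) \<longrightarrow> y = 0)"

definition alternating :: "('e \<Rightarrow> 'e \<Rightarrow> 'k::field) \<Rightarrow> bool" where
  "alternating b \<longleftrightarrow> (\<forall>x. b x x = 0)"

definition symmetric_form :: "('e \<Rightarrow> 'e \<Rightarrow> 'k::field) \<Rightarrow> bool" where
  "symmetric_form b \<longleftrightarrow> (\<forall>x y. b x y = b y x)"

definition submod :: "('k::field \<Rightarrow> 'e::ab_group_add \<Rightarrow> 'e) \<Rightarrow> ('a \<Rightarrow> 'e \<Rightarrow> 'e) \<Rightarrow> 'e set \<Rightarrow> bool" where
  "submod se act M \<longleftrightarrow> module.subspace se M \<and> (\<forall>a x. x \<in> M \<longrightarrow> act a x \<in> M)"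

definition tot_isotropic :: "('e \<Rightarrow> 'e \<Rightarrow> 'k::field) \<Rightarrow> 'e set \<Rightarrow> bool" where
  "tot_isotropic b M \<longleftrightarrow> (\<forall>x\<in>M. \<forall>y\<in>M. b x y = 0)"

definition orth :: "('e \<Rightarrow> 'e \<Rightarrow> 'k::field) \<Rightarrow> 'e set \<Rightarrow> 'e set" where
  "orth b S = {x. \<forall>y\<in>S. b x y = 0}"

text \<open>Subquotients: for submodules W \<subseteq> V of E, submodules of V/W correspond to submodules M
  with W \<subseteq> M \<subseteq> V (correspondence theorem). M/W is a simple module iff:\<close>
definition simple_subquot ::
  "('k::field \<Rightarrow> 'e::ab_group_add \<Rightarrow> 'e) \<Rightarrow> ('a \<Rightarrow> 'e \<Rightarrow> 'e) \<Rightarrow> 'e set \<Rightarrow> 'e set \<Rightarrow> bool" where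
  "simple_subquot se act W M \<longleftrightarrow> submod se act W \<and> submod se act M \<and> W \<subset> M \<and>
     (\<forall>N. submod se act N \<and> W \<subseteq> N \<and> N \<subseteq> M \<longrightarrow> N = W \<or> N = M)"

text \<open>V/W is semisimple iff it is the sum of its simple submodules, i.e. V is spanned by W
  together with all M (W \<subseteq> M \<subseteq> V) such that M/W is simple.\<close>
definition semisimple_subquot ::
  "('k::field \<Rightarrow> 'e::ab_group_add \<Rightarrow> 'e) \<Rightarrow> ('a \<Rightarrow> 'e \<Rightarrow> 'e) \<Rightarrow> 'e set \<Rightarrow> 'e set \<Rightarrow> bool" where
  "semisimple_subquot se act W V \<longleftrightarrow>
     V = module.span se (W \<union> \<Union>{M. simple_subquot se act W M \<and> M \<subseteq> V})"

text \<open>A hyperbolic family: vectors e_i, f_i (i < m) with b(e_i,e_j) = b(f_i,f_j) = 0 and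
  b(e_i,f_j) = \<delta>_ij; their span carries the hyperbolic form of rank 2m.\<close>
definition hyperbolic_family :: "('e \<Rightarrow> 'e \<Rightarrow> 'k::field) \<Rightarrow> nat \<Rightarrow> (nat \<Rightarrow> 'e) \<Rightarrow> (nat \<Rightarrow> 'e) \<Rightarrow> bool" where
  "hyperbolic_family b m e f \<longleftrightarrow> (\<forall>i<m. \<forall>j<m. b (e i) (e j) = 0 \<and> b (f i) (f j) = 0 \<and>
     b (e i) (f j) = (if i = j then 1 else 0))"

text \<open>(U, b|U) is isometric to (V/W, induced form) via \<psi>: U \<rightarrow> V, i.e. the composite
  U \<rightarrow> V \<rightarrow> V/W is a k-linear bijection preserving the forms.\<close>
definition isometric_to_subquot ::
  "('k::field \<Rightarrow> 'e::ab_group_add \<Rightarrow> 'e) \<Rightarrow> ('e \<Rightarrow> 'e \<Rightarrow> 'k) \<Rightarrow> 'e set \<Rightarrow> 'e set \<Rightarrow> 'e set \<Rightarrow> bool" where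
  "isometric_to_subquot se b U W V \<longleftrightarrow> (\<exists>\<psi>.
     (\<forall>u\<in>U. \<forall>v\<in>U. \<psi> (u + v) = \<psi> u + \<psi> v) \<and> (\<forall>c. \<forall>u\<in>U. \<psi> (se c u) = se c (\<psi> u)) \<and>
     \<psi> ` U \<subseteq> V \<and> (\<forall>u\<in>U. \<psi> u \<in> W \<longrightarrow> u = 0) \<and> (\<forall>x\<in>V. \<exists>u\<in>U. x - \<psi> u \<in> W) \<and>
     (\<forall>u\<in>U. \<forall>v\<in>U. b (\<psi> u) (\<psi> v) = b u v))"

end

theory Submission
  imports Defs
begin

(*
  Since b is reflexive and nondegenerate, dim N\<^sup>\<bottom> = dim E - dim N. For a submodule N
  with S \<subseteq> N \<subseteq> S\<^sup>\<bottom>, the submodule N \<inter> N\<^sup>\<bottom> is totally isotropic and contains S, so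
  maximality gives N \<inter> N\<^sup>\<bottom> = S, and the dimension count then gives N + N\<^sup>\<bottom> = S\<^sup>\<bottom>:
  every submodule of X = S\<^sup>\<bottom>/S has an orthogonal complement. If the sum T of all simple
  submodules of X were not all of S\<^sup>\<bottom>, its complement T\<^sup>\<bottom> would contain a simple
  submodule of X, which lies in T \<inter> T\<^sup>\<bottom> = S, absurd. Totally isotropic submodules of X
  pull back to totally isotropic submodules containing S, which are S by maximality.

  For (ii), take a basis e\<^sub>i of S and a family g\<^sub>j with b(e\<^sub>i, g\<^sub>j) = \<delta>\<^sub>i\<^sub>j. Subtracting from
  g\<^sub>j a triangular combination of the e\<^sub>i, with the diagonal coefficient b(g\<^sub>j, g\<^sub>j)/2 (this is
  where 2 \<noteq> 0 is needed, unless b is alternating), yields a hyperbolic family e, f spanning H.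
  The projection x \<mapsto> \<Sum> b(x, f\<^sub>i) e\<^sub>i + b(x, e\<^sub>i) f\<^sub>i splits E = H\<^sup>\<bottom> \<oplus> H, and H\<^sup>\<bottom> \<subseteq> S\<^sup>\<bottom>
  maps isometrically onto S\<^sup>\<bottom>/S.
*)

lemma sum_mult_delta:
  fixes c d :: "'i \<Rightarrow> 'a::semiring_1"
  assumes "finite I" "j \<in> I" "\<And>i. i \<in> I \<Longrightarrow> d i = (if i = j then 1 else 0)"
  shows "(\<Sum>i\<in>I. c i * d i) = c j"
proof -
  have "(\<Sum>i\<in>I. c i * d i) = (\<Sum>i\<in>I. if i = j then c j else 0)"
    by (rule sum.cong) (auto simp: assms(3))
  then show ?thesis using assms(1,2) by simp
qed

locale bilinear_space = vector_space se
  for se :: "'k::field \<Rightarrow> 'e::ab_group_add \<Rightarrow> 'e" (infixr \<open>*s\<close> 75) +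
  fixes b :: "'e \<Rightarrow> 'e \<Rightarrow> 'k"
  assumes bilinear: "bilinear_form se b"
begin

lemma form_add_left: "b (x + y) z = b x z + b y z"
  and form_add_right: "b x (y + z) = b x y + b x z"
  and form_scale_left: "b (c *s x) y = c * b x y"
  and form_scale_right: "b x (c *s y) = c * b x y"
  using bilinear by (auto simp: bilinear_form_def)

lemma form_zero_left: "b 0 y = 0"
  and form_diff_left: "b (x - x') y = b x y - b x' y"
  and form_sum_left: "b (sum f A) y = (\<Sum>v\<in>A. b (f v) y)"
proof -
  interpret additive "\<lambda>x. b x y" by standard (rule form_add_left)
  show "b 0 y = 0" "b (x - x') y = b x y - b x' y" "b (sum f A) y = (\<Sum>v\<in>A. b (f v) y)"
    by (rule zero diff sum)+
qed

lemma form_zero_right: "b x 0 = 0"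
  and form_diff_right: "b x (y - y') = b x y - b x y'"
  and form_sum_right: "b x (sum f A) = (\<Sum>v\<in>A. b x (f v))"
proof -
  interpret additive "\<lambda>y. b x y" by standard (rule form_add_right)
  show "b x 0 = 0" "b x (y - y') = b x y - b x y'" "b x (sum f A) = (\<Sum>v\<in>A. b x (f v))"
    by (rule zero diff sum)+
qed

lemmas form_simps = form_add_left form_add_right form_scale_left form_scale_right
  form_zero_left form_zero_right form_diff_left form_diff_right form_sum_left form_sum_right

lemma alternating_imp_skew: "alternating b \<Longrightarrow> b x y = - b y x"
  using form_simps(1,2)[of x y "x + y"] form_add_right[of x x y] form_add_right[of y x y]
  by (simp add: alternating_def add_eq_0_iff)

lemma subspace_orth: "subspace (orth b N)"
  unfolding subspace_def orth_def by (simp add: form_simps)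

lemma orth_antimono: "A \<subseteq> B \<Longrightarrow> orth b B \<subseteq> orth b A"
  by (auto simp: orth_def)

lemma orth_span [simp]: "orth b (span B) = orth b B"
proof
  show "orth b (span B) \<subseteq> orth b B" by (rule orth_antimono[OF span_superset])
  show "orth b B \<subseteq> orth b (span B)"
  proof
    fix x assume x: "x \<in> orth b B"
    have "subspace {y. b x y = 0}"
      unfolding subspace_def by (simp add: form_simps)
    then have "b x y = 0" if "y \<in> span B" for y
      using span_induct[OF that] x by (auto simp: orth_def)
    then show "x \<in> orth b (span B)" by (simp add: orth_def)
  qed
qed

lemma dual_vector_exists:
  assumes left_nondeg: "\<And>x. (\<forall>y. b x y = 0) \<Longrightarrow> x = 0"
    and F: "finite F" and g: "\<forall>u\<in>F. \<forall>v\<in>F. b u (g v) = (if u = v then 1 else 0)"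
    and a: "a \<notin> span F"
  shows "\<exists>y. (\<forall>u\<in>F. b u y = 0) \<and> b a y = 1"
proof -
  have "\<exists>y. (\<forall>u\<in>F. b u y = 0) \<and> b a y \<noteq> 0"
  proof (rule ccontr)
    assume no_y: "\<not> ?thesis"
    \<comment> \<open>then a pairs like its expansion a' along F, so a = a' \<in> span F\<close>
    define a' where "a' = (\<Sum>v\<in>F. b a (g v) *s v)"
    have "b (a - a') y = 0" for y
    proof -
      define y' where "y' = y - (\<Sum>v\<in>F. b v y *s g v)"
      have "b u y' = 0" if "u \<in> F" for u
      proof -
        have "(\<Sum>v\<in>F. b v y * b u (g v)) = b u y"
          by (rule sum_mult_delta[OF F that]) (use g that in auto)
        then show ?thesis by (simp add: y'_def form_simps)
      qed
      then have "b a y' = 0" using no_y by blast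
      then show ?thesis by (simp add: y'_def a'_def form_simps mult.commute)
    qed
    then have "a = a'" using left_nondeg by force
    moreover have "a' \<in> span F" unfolding a'_def by (intro span_sum span_scale span_base)
    ultimately show False using a by simp
  qed
  then obtain y where "\<forall>u\<in>F. b u y = 0" "b a y \<noteq> 0" by blast
  then show ?thesis by (intro exI[of _ "inverse (b a y) *s y"]) (simp add: form_simps)
qed

lemma dual_basis_exists:
  assumes left_nondeg: "\<And>x. (\<forall>y. b x y = 0) \<Longrightarrow> x = 0"
    and "finite B" "independent B"
  shows "\<exists>g. \<forall>u\<in>B. \<forall>v\<in>B. b u (g v) = (if u = v then 1 else 0)"
  using assms(2,3)
proof (induction B rule: finite_induct)
  case empty then show ?case by simp
next
  case (insert a F)
  then have "independent F" "a \<notin> span F" by (auto simp: independent_insert)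
  with insert.IH obtain g where g: "\<forall>u\<in>F. \<forall>v\<in>F. b u (g v) = (if u = v then 1 else 0)"
    by blast
  obtain y where y: "\<forall>u\<in>F. b u y = 0" "b a y = 1"
    using dual_vector_exists[OF left_nondeg insert.hyps(1) g \<open>a \<notin> span F\<close>] by blast
  define g' where "g' v = (if v = a then y else g v - b a (g v) *s y)" for v
  have "\<forall>u\<in>insert a F. \<forall>v\<in>insert a F. b u (g' v) = (if u = v then 1 else 0)"
    using g y insert.hyps(2) by (auto simp: g'_def form_simps)
  then show ?case by blast
qed

context
  fixes I :: "'i set" and v w :: "'i \<Rightarrow> 'e"
  assumes finite_I: "finite I"
    and dual: "\<And>i j. i \<in> I \<Longrightarrow> j \<in> I \<Longrightarrow> b (v i) (w j) = (if i = j then 1 else 0)"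
begin

lemma sum_dual_weights: "j \<in> I \<Longrightarrow> (\<Sum>i\<in>I. c i * b (v i) (w j)) = c j"
  by (rule sum_mult_delta[OF finite_I]) (simp_all add: dual)

lemma dual_family_independent: "inj_on v I" "independent (v ` I)"
proof -
  show inj: "inj_on v I"
  proof (rule inj_onI)
    fix i j assume "i \<in> I" "j \<in> I" "v i = v j"
    then show "i = j" using dual[of i j] dual[of j j] by (auto split: if_splits)
  qed
  have "c (v j) = 0" if zero: "(\<Sum>x\<in>v ` I. c x *s x) = 0" and j: "j \<in> I" for c j
  proof -
    have "(\<Sum>i\<in>I. c (v i) *s v i) = 0" using zero by (simp add: sum.reindex[OF inj])
    then have "(\<Sum>i\<in>I. c (v i) * b (v i) (w j)) = 0"
      using form_sum_left[of "\<lambda>i. c (v i) *s v i" I "w j"] by (simp add: form_simps)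
    then show ?thesis using sum_dual_weights[OF j] by simp
  qed
  then show "independent (v ` I)" using finite_I by (auto simp: dependent_finite)
qed

lemma dual_projection:
  defines "p \<equiv> \<lambda>x. \<Sum>i\<in>I. b x (w i) *s v i"
  shows "x - p x \<in> orth b (w ` I)" and "p x \<in> span (v ` I)"
    and "span (v ` I) \<inter> orth b (w ` I) = {0}"
proof -
  show "x - p x \<in> orth b (w ` I)"
    by (auto simp: orth_def p_def form_simps sum_dual_weights)
  show "p x \<in> span (v ` I)"
    unfolding p_def by (intro span_sum span_scale span_base) auto
  have "p z = z" if "z \<in> span (v ` I)" for z
    using that
  proof (induction rule: span_induct_alt)
    case base then show ?case by (simp add: p_def form_simps)
  next
    case (step c x y)
    then obtain j where j: "j \<in> I" "x = v j" by auto
    have "p x = (\<Sum>i\<in>I. (if i = j then 1 else 0) *s v i)"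
      unfolding p_def j(2) using j(1) dual by (intro sum.cong) auto
    also have "\<dots> = x" using finite_I j by (simp add: if_distrib[of "\<lambda>c. c *s _"] cong: if_cong)
    finally have px: "p x = x" .
    have "p (c *s x + y) = p (c *s x) + p y"
      by (simp add: p_def form_simps sum.distrib scale_left_distrib)
    moreover have "p (c *s x) = c *s p x"
      by (simp add: p_def form_simps scale_sum_right)
    ultimately show ?case using step px by simp
  qed
  moreover have "p z = 0" if "z \<in> orth b (w ` I)" for z
    using that by (simp add: p_def orth_def)
  ultimately show "span (v ` I) \<inter> orth b (w ` I) = {0}"
    using span_zero subspace_0[OF subspace_orth] by force
qed

end

lemma isometric_to_subquot_inclusion:
  assumes "U \<subseteq> V" "U \<inter> W \<subseteq> {0}" "\<And>x. x \<in> V \<Longrightarrow> \<exists>u\<in>U. x - u \<in> W"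
  shows "isometric_to_subquot se b U W V"
  unfolding isometric_to_subquot_def
  by (rule exI[of _ "\<lambda>x. x"]) (use assms in auto)

lemma hyperbolic_partner_exists:
  assumes sym: "symmetric_form b" and two: "(2::'k) \<noteq> 0 \<or> alternating b"
    and ee: "\<And>i j. i < m \<Longrightarrow> j < m \<Longrightarrow> b (e i) (e j) = 0"
    and eg: "\<And>i j. i < m \<Longrightarrow> j < m \<Longrightarrow> b (e i) (g j) = (if i = j then 1 else 0)"
  shows "\<exists>f. hyperbolic_family b m e f"
proof -
  have b_sym: "b x y = b y x" for x y using sym by (simp add: symmetric_form_def)
  define c where
    "c l j = (if l < j then b (g l) (g j) else if l = j then b (g j) (g j) / 2 else 0)" for l j
  have c_sym: "c i j + c j i = b (g i) (g j)" for i j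
  proof -
    have "b (g i) (g i) / 2 + b (g i) (g i) / 2 = b (g i) (g i)"
      using two by (auto simp: alternating_def field_simps)
    then show ?thesis using b_sym[of "g i" "g j"] by (auto simp: c_def)
  qed
  define f where "f j = g j - (\<Sum>l<m. c l j *s e l)" for j
  have ef: "b (e i) (f j) = (if i = j then 1 else 0)" if "i < m" "j < m" for i j
  proof -
    have "(\<Sum>l<m. c l j * b (e i) (e l)) = 0" using ee[OF that(1)] by (simp add: sum.neutral)
    then show ?thesis using eg[OF that] by (simp add: f_def form_simps)
  qed
  have gf: "b (g i) (f j) = b (g i) (g j) - c i j" if "i < m" "j < m" for i j
  proof -
    have "(\<Sum>l<m. c l j * b (g i) (e l)) = c i j"
      by (rule sum_mult_delta) (use that eg b_sym in auto)
    then show ?thesis by (simp add: f_def form_simps)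
  qed
  have ff: "b (f i) (f j) = 0" if "i < m" "j < m" for i j
  proof -
    have "(\<Sum>l<m. c l i * b (e l) (f j)) = c j i"
      by (rule sum_mult_delta) (use that ef in auto)
    then have "b (f i) (f j) = b (g i) (g j) - c i j - c j i"
      using gf[OF that] by (simp add: f_def[of i] form_simps)
    then show ?thesis using c_sym[of i j] by (simp add: algebra_simps)
  qed
  show ?thesis unfolding hyperbolic_family_def using ee ef ff by blast
qed

lemma hyperbolic_decomposition:
  assumes sym: "symmetric_form b" and hyp: "hyperbolic_family b m e f"
  defines "H \<equiv> span (e ` {..<m} \<union> f ` {..<m})"
  shows "orth b H \<inter> H = {0}" and "\<exists>u\<in>orth b H. \<exists>h\<in>H. x = u + h"
    and "x \<in> orth b (e ` {..<m}) \<Longrightarrow> x - (\<Sum>i<m. b x (f i) *s e i) \<in> orth b H"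
proof -
  let ?I = "{..<m} <+> {..<m}" and ?v = "case_sum e f" and ?w = "case_sum f e"
  have ee: "b (e i) (e j) = 0" and ff: "b (f i) (f j) = 0"
    and ef: "b (e i) (f j) = (if i = j then 1 else 0)"
    and fe: "b (f i) (e j) = (if i = j then 1 else 0)" if "i < m" "j < m" for i j
    using hyp sym that unfolding hyperbolic_family_def symmetric_form_def by auto
  have dual: "b (?v i) (?w j) = (if i = j then 1 else 0)" if "i \<in> ?I" "j \<in> ?I" for i j
    using that by (auto simp: ee ff ef fe split: if_splits)
  have v_I: "?v ` ?I = e ` {..<m} \<union> f ` {..<m}" and w_I: "?w ` ?I = f ` {..<m} \<union> e ` {..<m}"
    by (auto simp: Plus_def image_Un image_image)
  have orth_H: "orth b (?w ` ?I) = orth b H"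
    unfolding H_def w_I by (simp add: Un_commute)
  have "finite ?I" by simp
  note proj = dual_projection[OF this dual, unfolded v_I orth_H, folded H_def]
  have p: "(\<Sum>i\<in>?I. b x (?w i) *s ?v i) = (\<Sum>i<m. b x (f i) *s e i) + (\<Sum>i<m. b x (e i) *s f i)"
    by (simp add: sum.Plus)
  show "orth b H \<inter> H = {0}" using proj(3) by blast
  show "\<exists>u\<in>orth b H. \<exists>h\<in>H. x = u + h"
    using proj(1,2)[of x] by force
  assume "x \<in> orth b (e ` {..<m})"
  then have "(\<Sum>i<m. b x (e i) *s f i) = 0" by (simp add: orth_def)
  then show "x - (\<Sum>i<m. b x (f i) *s e i) \<in> orth b H" using proj(1)[of x] p by simp
qed

end

locale nondegenerate_space = bilinear_space se b + finite_dimensional_vector_space se Basis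
  for se :: "'k::field \<Rightarrow> 'e::ab_group_add \<Rightarrow> 'e" (infixr \<open>*s\<close> 75) and b and Basis +
  assumes nondeg: "nondegenerate b"
begin

lemma left_nondegenerate: "(\<forall>y. b x y = 0) \<Longrightarrow> x = 0"
  and right_nondegenerate: "(\<forall>x. b x y = 0) \<Longrightarrow> y = 0"
  using nondeg by (auto simp: nondegenerate_def)

lemma dim_orth:
  assumes "subspace N"
  shows "dim (orth b N) + dim N = dim (UNIV :: 'e set)"
proof -
  obtain B where B: "B \<subseteq> N" "independent B" "N \<subseteq> span B" "card B = dim N"
    by (rule basis_exists)
  have fin: "finite B" using B(2) finiteI_independent by blast
  have orth_N: "orth b N = orth b B"
    using B(1,3) assms span_subspace[of B N] orth_span[of B] by simp
  interpret transpose: bilinear_space se "\<lambda>x y. b y x"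
    by unfold_locales (use bilinear in \<open>auto simp: bilinear_form_def\<close>)
  obtain h where "\<forall>u\<in>B. \<forall>v\<in>B. b (h v) u = (if u = v then 1 else 0)"
    using transpose.dual_basis_exists[OF right_nondegenerate fin B(2)] by blast
  then have dual: "b (h i) j = (if i = j then 1 else 0)" if "i \<in> B" "j \<in> B" for i j
    using that by auto
  let ?C = "span (h ` B)"
  note proj = dual_projection[of B h "\<lambda>x. x", OF fin dual, unfolded image_ident, folded orth_N]
  have "x \<in> {x + y |x y. x \<in> orth b N \<and> y \<in> ?C}" for x
    using proj(1,2)[of x] by (intro CollectI exI conjI) (rule diff_add_cancel[symmetric])
  then have "{x + y |x y. x \<in> orth b N \<and> y \<in> ?C} = UNIV" by blast
  moreover have "dim ?C = card B"
    using dual_family_independent[OF fin dual] by (simp add: dim_span dim_eq_card_independent card_image)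
  ultimately show ?thesis
    using dim_sums_Int[OF subspace_orth subspace_span, of N "h ` B"] proj(3) B(4) by (simp add: Int_commute)
qed

lemma hyperbolic_splitting:
  assumes sym: "symmetric_form b" and two: "(2::'k) \<noteq> 0 \<or> alternating b"
    and S: "subspace S" "tot_isotropic b S"
  shows "\<exists>U e f. subspace U \<and> hyperbolic_family b (dim S) e f \<and>
           (let H = span (e ` {..<dim S} \<union> f ` {..<dim S})
            in U \<inter> H = {0} \<and> (\<forall>x. \<exists>u\<in>U. \<exists>h\<in>H. x = u + h) \<and> (\<forall>u\<in>U. \<forall>h\<in>H. b u h = 0)) \<and>
           isometric_to_subquot se b U S (orth b S)"
proof -
  let ?m = "dim S"
  obtain B where B: "B \<subseteq> S" "independent B" "S \<subseteq> span B" "card B = ?m"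
    by (rule basis_exists)
  have fin: "finite B" using B(2) finiteI_independent by blast
  obtain e where "bij_betw e {..<?m} B"
    using ex_bij_betw_nat_finite[OF fin] B(4) by (auto simp: atLeast0LessThan)
  then have inj_e: "inj_on e {..<?m}" and e_B: "e ` {..<?m} = B" by (auto simp: bij_betw_def)
  obtain g where g: "\<forall>u\<in>B. \<forall>v\<in>B. b u (g v) = (if u = v then 1 else 0)"
    using dual_basis_exists[OF left_nondegenerate fin B(2)] by blast
  have e_S: "e i \<in> S" if "i < ?m" for i using that e_B B(1) by auto
  have ee: "b (e i) (e j) = 0" if "i < ?m" "j < ?m" for i j
    using S(2) e_S[OF that(1)] e_S[OF that(2)] by (simp add: tot_isotropic_def)
  have eg: "b (e i) (g (e j)) = (if i = j then 1 else 0)" if "i < ?m" "j < ?m" for i j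
    using g that e_B inj_onD[OF inj_e] by fastforce
  obtain f where hyp: "hyperbolic_family b ?m e f"
    using hyperbolic_partner_exists[OF sym two ee eg] by blast
  define H where "H = span (e ` {..<?m} \<union> f ` {..<?m})"
  define U where "U = orth b H"
  note dec = hyperbolic_decomposition[OF sym hyp, folded H_def U_def]
  have "S \<subseteq> H"
    using B(3) e_B span_mono[of "e ` {..<?m}" "e ` {..<?m} \<union> f ` {..<?m}"] by (auto simp: H_def)
  then have U_orth_S: "U \<subseteq> orth b S" and U_S: "U \<inter> S \<subseteq> {0}"
    using dec(1) orth_antimono by (auto simp: U_def)
  have U_cover: "\<exists>u\<in>U. x - u \<in> S" if "x \<in> orth b S" for x
  proof
    have "x \<in> orth b (e ` {..<?m})" using that e_S by (auto simp: orth_def)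
    then show "x - (\<Sum>i<?m. b x (f i) *s e i) \<in> U" by (rule dec(3))
    show "x - (x - (\<Sum>i<?m. b x (f i) *s e i)) \<in> S"
      using e_S by (auto intro: subspace_sum[OF S(1)] subspace_scale[OF S(1)])
  qed
  have iso: "isometric_to_subquot se b U S (orth b S)"
    by (rule isometric_to_subquot_inclusion[OF U_orth_S U_S U_cover])
  have "U \<inter> H = {0} \<and> (\<forall>x. \<exists>u\<in>U. \<exists>h\<in>H. x = u + h) \<and>
      (\<forall>u\<in>U. \<forall>h\<in>H. b u h = 0)"
    using dec(1,2) by (simp add: U_def orth_def)
  then show ?thesis
    using hyp iso subspace_orth[of H] unfolding U_def[symmetric]
    by (intro exI[of _ U]) (rule exI[of _ e], rule exI[of _ f], simp add: Let_def flip: H_def)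
qed

end

lemma (in vector_space) submod_span:
  assumes act_add: "\<And>a v w. act a (v + w) = act a v + act a w"
    and act_scale: "\<And>a c v. act a (c *s v) = c *s act a v"
    and closed: "\<And>a x. x \<in> X \<Longrightarrow> act a x \<in> X"
  shows "submod scale act (span X)"
proof -
  have "act a x \<in> span X" if "x \<in> span X" for a x
  proof -
    interpret additive "act a" by standard (rule act_add)
    have "subspace {x. act a x \<in> span X}"
      unfolding subspace_def by (simp add: zero act_add act_scale span_zero span_add span_scale)
    then show ?thesis using span_induct[OF that] closed span_base by blast
  qed
  then show ?thesis by (simp add: submod_def)
qed

lemma (in finite_dimensional_vector_space) ex_simple_subquot:
  assumes W: "submod scale act W" and C: "submod scale act C" and "W \<subset> C"
  shows "\<exists>M. simple_subquot scale act W M \<and> M \<subseteq> C"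
proof -
  let ?P = "\<lambda>M. submod scale act M \<and> W \<subset> M \<and> M \<subseteq> C"
  obtain M where M: "?P M" and least: "\<And>N. ?P N \<Longrightarrow> dim M \<le> dim N"
    using ex_has_least_nat[of ?P C dim] C \<open>W \<subset> C\<close> by blast
  have "N = W \<or> N = M" if N: "submod scale act N" "W \<subseteq> N" "N \<subseteq> M" for N
  proof (rule ccontr)
    assume "\<not> (N = W \<or> N = M)"
    then have "W \<subset> N" "N \<subset> M" using N by auto
    moreover have "span N = N" "span M = M" using N(1) M by (simp_all add: submod_def)
    ultimately have "dim N < dim M" using dim_psubset[of N M] by (simp only:)
    moreover have "?P N" using N(1) \<open>W \<subset> N\<close> \<open>N \<subset> M\<close> M by auto
    ultimately show False using least by fastforce
  qed
  then show ?thesis using W M unfolding simple_subquot_def by blast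
qed

locale invariant_form_module = nondegenerate_space se b Basis
  for se :: "'k::field \<Rightarrow> 'e::ab_group_add \<Rightarrow> 'e" (infixr \<open>*s\<close> 75) and b and Basis +
  fixes act :: "'a \<Rightarrow> 'e \<Rightarrow> 'e" and invl :: "'a \<Rightarrow> 'a"
  assumes act_add: "act a (v + w) = act a v + act a w"
    and act_scale: "act a (c *s v) = c *s act a v"
    and adjoint: "b (act a x) y = b x (act (invl a) y)"
    and reflexive: "b x y = 0 \<longleftrightarrow> b y x = 0"
begin

lemma submod_orth: "submod se act N \<Longrightarrow> submod se act (orth b N)"
  unfolding submod_def using subspace_orth by (auto simp: orth_def adjoint)

end

locale maximal_isotropic_submodule = invariant_form_module se b Basis act invl
  for se :: "'k::field \<Rightarrow> 'e::ab_group_add \<Rightarrow> 'e" (infixr \<open>*s\<close> 75) and b Basis act invl +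
  fixes S :: "'e set"
  assumes S_submod: "submod se act S"
    and S_isotropic: "tot_isotropic b S"
    and S_maximal: "\<forall>T. submod se act T \<and> tot_isotropic b T \<and> S \<subseteq> T \<longrightarrow> T = S"
begin

lemma subspace_S: "subspace S"
  using S_submod by (simp add: submod_def)

lemma S_subset_orth: "S \<subseteq> orth b S"
  using S_isotropic by (auto simp: orth_def tot_isotropic_def)

lemma orth_complement:
  assumes N: "submod se act N" "S \<subseteq> N" "N \<subseteq> orth b S"
  shows "N \<inter> orth b N = S" and "{x + y |x y. x \<in> N \<and> y \<in> orth b N} = orth b S"
proof -
  have "subspace N" using N(1) by (simp add: submod_def)
  have "S \<subseteq> orth b N" using N(3) reflexive by (auto simp: orth_def)
  moreover have "submod se act (N \<inter> orth b N)"
    using N(1) submod_orth[OF N(1)] by (auto simp: submod_def intro: subspace_inter)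
  moreover have "tot_isotropic b (N \<inter> orth b N)"
    by (auto simp: tot_isotropic_def orth_def)
  ultimately show meet: "N \<inter> orth b N = S"
    using S_maximal N(2) by blast
  let ?P = "{x + y |x y. x \<in> N \<and> y \<in> orth b N}"
  have "?P \<subseteq> orth b S"
    using N(3) orth_antimono[OF N(2)] subspace_add[OF subspace_orth] by blast
  moreover have "dim ?P + dim S = dim N + dim (orth b N)"
    using dim_sums_Int[OF \<open>subspace N\<close> subspace_orth[of N]] meet by simp
  moreover have "dim (orth b S) \<le> dim ?P"
    using calculation(2) dim_orth[OF \<open>subspace N\<close>] dim_orth[OF subspace_S] by linarith
  ultimately show "?P = orth b S"
    using subspace_dim_equal[OF subspace_sums[OF \<open>subspace N\<close> subspace_orth[of N]] subspace_orth]
    by blast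
qed

lemma semisimple_orth: "semisimple_subquot se act S (orth b S)"
proof -
  let ?F = "\<Union>{M. simple_subquot se act S M \<and> M \<subseteq> orth b S}"
  let ?T = "span (S \<union> ?F)"
  have T_submod: "submod se act ?T"
  proof (rule submod_span[OF act_add act_scale])
    fix a x assume "x \<in> S \<union> ?F"
    then consider "x \<in> S" | M where "simple_subquot se act S M" "M \<subseteq> orth b S" "x \<in> M"
      by blast
    then show "act a x \<in> S \<union> ?F"
    proof cases
      case 1
      then show ?thesis using S_submod by (simp add: submod_def)
    next
      case 2
      then have "act a x \<in> M" by (simp add: simple_subquot_def submod_def)
      with 2 show ?thesis by blast
    qed
  qed
  have S_T: "S \<subseteq> ?T" by (auto intro: span_base)
  have T_orth: "?T \<subseteq> orth b S"
    using S_subset_orth by (intro span_minimal subspace_orth) auto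
  show ?thesis unfolding semisimple_subquot_def
  proof (rule ccontr)
    assume "orth b S \<noteq> ?T"
    note compl = orth_complement[OF T_submod S_T T_orth]
    have "\<not> orth b ?T \<subseteq> ?T"
    proof
      assume "orth b ?T \<subseteq> ?T"
      have "x \<in> ?T" if "x \<in> orth b S" for x
      proof -
        obtain t c where "x = t + c" "t \<in> ?T" "c \<in> orth b ?T"
          using \<open>x \<in> orth b S\<close> compl(2) by blast
        then show ?thesis using \<open>orth b ?T \<subseteq> ?T\<close> span_add by blast
      qed
      then show False using \<open>orth b S \<noteq> ?T\<close> T_orth by blast
    qed
    then have "S \<subset> orth b ?T" using compl(1) by blast
    then obtain M where M: "simple_subquot se act S M" "M \<subseteq> orth b ?T"
      using ex_simple_subquot[OF S_submod submod_orth[OF T_submod]] by blast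
    have "M \<subseteq> orth b S" using M(2) orth_antimono[OF S_T] by blast
    then have "M \<subseteq> ?T" using M(1) by (auto intro: span_base)
    then have "M \<subseteq> S" using M(2) compl(1) by blast
    then show False using M(1) by (auto simp: simple_subquot_def)
  qed
qed

end

theorem lemma4p2p4:
  fixes sa :: "'k::field \<Rightarrow> 'a::ring_1 \<Rightarrow> 'a"
    and invl :: "'a \<Rightarrow> 'a"
    and se :: "'k \<Rightarrow> 'e::ab_group_add \<Rightarrow> 'e"
    and act :: "'a \<Rightarrow> 'e \<Rightarrow> 'e"
    and b :: "'e \<Rightarrow> 'e \<Rightarrow> 'k"
    and S :: "'e set"
  assumes alg: "k_algebra sa"
    and invol: "algebra_involution sa invl"
    and modl: "algebra_module sa se act"
    and fin: "finite_dim se"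
    and bil: "bilinear_form se b"
    and nondeg: "nondegenerate b"
    and adj: "\<forall>a x y. b (act a x) y = b x (act (invl a) y)"
    and btype: "alternating b \<or> (symmetric_form b \<and> (2::'k) \<noteq> 0)"
    and S_sub: "submod se act S"
    and S_iso: "tot_isotropic b S"
    and S_max: "\<forall>T. submod se act T \<and> tot_isotropic b T \<and> S \<subseteq> T \<longrightarrow> T = S"
  shows "(semisimple_subquot se act S (orth b S) \<and>
          (\<forall>M. submod se act M \<and> S \<subseteq> M \<and> M \<subseteq> orth b S \<and> tot_isotropic b M \<longrightarrow> M = S)) \<and>
         (symmetric_form b \<longrightarrow>
           (\<exists>U e f. module.subspace se U \<and>
              hyperbolic_family b (vector_space.dim se S) e f \<and>
              (let H = module.span se (e ` {..<vector_space.dim se S} \<union> f ` {..<vector_space.dim se S})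
               in U \<inter> H = {0} \<and> (\<forall>x. \<exists>u\<in>U. \<exists>h\<in>H. x = u + h) \<and>
                  (\<forall>u\<in>U. \<forall>h\<in>H. b u h = 0)) \<and>
              isometric_to_subquot se b U S (orth b S)))"
proof -
  interpret vector_space se using modl by (simp add: algebra_module_def)
  obtain B where B: "finite B" "span B = UNIV" using fin by (auto simp: finite_dim_def)
  obtain Basis where Basis: "independent Basis" "span Basis = UNIV"
    using basis_exists[of UNIV] by (metis top.extremum_uniqueI)
  have "finite Basis" using independent_span_bound[OF B(1) Basis(1)] B(2) by simp
  interpret bilinear_space se b by unfold_locales (rule bil)
  have reflexive: "b x y = 0 \<longleftrightarrow> b y x = 0" for x y
    using btype alternating_imp_skew[of x y] by (auto simp: symmetric_form_def)
  interpret maximal_isotropic_submodule se b Basis act invl S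
    using \<open>finite Basis\<close> Basis nondeg modl adj reflexive S_sub S_iso S_max
    by unfold_locales (auto simp: algebra_module_def)
  have "symmetric_form b \<Longrightarrow> (2::'k) \<noteq> 0 \<or> alternating b" using btype by blast
  then show ?thesis
    using semisimple_orth S_maximal hyperbolic_splitting[OF _ _ subspace_S S_isotropic] by blast
qed

end
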